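(* The Lie algebra of the Lie group $(\delta+\mathbb{K}^m\langle\langle X\rangle\rangle,\circ,\delta)$ (Fréchet topology) is the space $\mathbb{K}^m\langle\langle X\rangle\rangle$ with Lie bracket $$[c,d]=c\lhd d-d\lhd c.$$
   Context: $\mathbb{K}\in\{\mathbb{R},\mathbb{C}\}$. $X=\{x_0,x_1,\ldots,x_m\}$ is a finite alphabet, $X^\ast$ its words (including $\emptyset$). $\mathbb{K}^m\langle\langle X\rangle\rangle$ is the space of maps $X^\ast\to\mathbb{K}^m$ with the Fréchet (product) topology; $d[i]$ denotes the $i$-th component series of $d$. $\delta$ is a formal symbol and $\delta+\mathbb{K}^m\langle\langle X\rangle\rangle=\{\delta+c\}$ is an affine space modelled on $\mathbb{K}^m\langle\langle X\rangle\rangle$. The shuffle product $\sqcup\!\sqcup$ is determined on words by $(x_i\eta)\sqcup\!\sqcup(x_j\xi)=x_i(\eta\sqcup\!\sqcup(x_j\xi))+x_j((x_i\eta)\sqcup\!\sqcup\xi)$, $\eta\sqcup\!\sqcup\emptyset=\emptyset\sqcup\!\sqcup\eta=\eta$. Mixed composition: with $d[0]:=0$, $\phi_d(\emptyset)=\mathrm{id}$, $\phi_d(x_i\eta)=\phi_d(x_i)\circ\phi_d(\eta)$, $\phi_d(x_i)(e)=x_ie+x_0(d[i]\sqcup\!\sqcup e)$, $c\,\tilde\circ\,d_\delta=\sum_\eta(c,\eta)\phi_d(\eta)(1\cdot\emptyset)$; group product $(\delta+c)\circ(\delta+d)=\delta+d+c\,\tilde\circ\,d_\delta$, identity $\delta$;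 this is an analytic Lie group. Pre-Lie product: $c\lhd d=\sum_{\eta}(c,\eta)\,\eta\lhd d$, where $\emptyset\lhd d=0$, $(x_0\eta)\lhd d=x_0(\eta\lhd d)$, and $(x_j\eta)\lhd d=x_j(\eta\lhd d)+x_0(\eta\sqcup\!\sqcup d[j])$ for $j=1,\ldots,m$ (products of elements of $\mathbb{K}^m$ taken componentwise). The Lie algebra is $T_\delta$ of the group with bracket obtained by evaluating at $\delta$ the bracket of left-invariant vector fields. *)

theory Defs
  imports "HOL-Analysis.Analysis"
begin

text \<open>Letters x_0,...,x_m are encoded as natural numbers 0..m; words are nat lists.
  A scalar series is a map from words to the field; an element of K^m<<X>> is a
  map from words to component functions (components indexed by 1..m).\<close>

type_synonym 'a ser = "nat list \<Rightarrow> 'a"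
type_synonym 'a vser = "nat list \<Rightarrow> nat \<Rightarrow> 'a"

definition Words :: "nat \<Rightarrow> nat list set" where
  "Words m = {w. set w \<subseteq> {0..m}}"

definition pre :: "nat \<Rightarrow> 'a::zero ser \<Rightarrow> 'a ser" where
  "pre x s = (\<lambda>w. case w of [] \<Rightarrow> 0 | y # u \<Rightarrow> (if y = x then s u else 0))"

definition word_ser :: "nat list \<Rightarrow> 'a::{zero,one} ser" where
  "word_ser v = (\<lambda>w. if w = v then 1 else 0)"

definition one_ser :: "'a::{zero,one} ser" where
  "one_ser = word_ser []"

text \<open>shuffle of two words, as a series with multiplicities\<close>
fun wsh :: "nat list \<Rightarrow> nat list \<Rightarrow> nat ser" where
  "wsh [] v = word_ser v"
| "wsh (a # u) [] = word_ser (a # u)"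
| "wsh (a # u) (b # v) = (\<lambda>w. pre a (wsh u (b # v)) w + pre b (wsh (a # u) v) w)"

text \<open>shuffle of series: bilinear extension (coefficientwise finite sums)\<close>
definition shuffle :: "nat \<Rightarrow> 'a::real_normed_field ser \<Rightarrow> 'a ser \<Rightarrow> 'a ser" where
  "shuffle m a b = (\<lambda>w. \<Sum>\<^sub>\<infinity>(u, v) \<in> Words m \<times> Words m. a u * b v * of_nat (wsh u v w))"

text \<open>component series d[j], with the convention d[0] = 0\<close>
definition comp_ser :: "'a::zero vser \<Rightarrow> nat \<Rightarrow> 'a ser" where
  "comp_ser d j = (\<lambda>w. if j = 0 then 0 else d w j)"

definition phi1 :: "nat \<Rightarrow> 'a::real_normed_field vser \<Rightarrow> nat \<Rightarrow> 'a ser \<Rightarrow> 'a ser" where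
  "phi1 m d i e = (\<lambda>w. pre i e w + pre 0 (shuffle m (comp_ser d i) e) w)"

fun phi :: "nat \<Rightarrow> 'a::real_normed_field vser \<Rightarrow> nat list \<Rightarrow> 'a ser \<Rightarrow> 'a ser" where
  "phi m d [] e = e"
| "phi m d (i # eta) e = phi1 m d i (phi m d eta e)"

definition mixcomp :: "nat \<Rightarrow> 'a::real_normed_field vser \<Rightarrow> 'a vser \<Rightarrow> 'a vser" where
  "mixcomp m c d = (\<lambda>w i. \<Sum>\<^sub>\<infinity>eta \<in> Words m. c eta i * phi m d eta one_ser w)"

text \<open>group product in the global chart \<delta> + c \<mapsto> c : (\<delta>+c)\<circ>(\<delta>+d) = \<delta> + (d + c \<tilde>\<circ> d_\<delta>);
  the identity \<delta> corresponds to 0\<close>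
definition grp_mul :: "nat \<Rightarrow> 'a::real_normed_field vser \<Rightarrow> 'a vser \<Rightarrow> 'a vser" where
  "grp_mul m c d = (\<lambda>w i. d w i + mixcomp m c d w i)"

fun prelie_word :: "nat \<Rightarrow> nat list \<Rightarrow> 'a::real_normed_field vser \<Rightarrow> 'a ser" where
  "prelie_word m [] d = (\<lambda>w. 0)"
| "prelie_word m (j # eta) d =
     (\<lambda>w. pre j (prelie_word m eta d) w
          + (if j = 0 then 0 else pre 0 (shuffle m (word_ser eta) (comp_ser d j)) w))"

definition prelie :: "nat \<Rightarrow> 'a::real_normed_field vser \<Rightarrow> 'a vser \<Rightarrow> 'a vser" where
  "prelie m c d = (\<lambda>w i. \<Sum>\<^sub>\<infinity>eta \<in> Words m. c eta i * prelie_word m eta d w)"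

text \<open>Directional (Bastiani/Gateaux) derivative in the Frechet product topology:
  convergence in the product topology is coefficientwise convergence.\<close>
definition has_gderiv :: "('a::real_normed_field vser \<Rightarrow> 'a vser) \<Rightarrow> 'a vser \<Rightarrow> 'a vser \<Rightarrow> 'a vser \<Rightarrow> bool" where
  "has_gderiv F x v L \<longleftrightarrow>
     (\<forall>w i. ((\<lambda>t::real. F (\<lambda>u k. x u k + of_real t * v u k) w i) has_vector_derivative L w i) (at 0))"

text \<open>Z is (on the meaningful coordinates) the Lie bracket [X,Y] of the Lie algebra T_\<delta>:
  the value at \<delta> (chart point 0) of the bracket [X^L, Y^L] = dY^L \<cdot> X^L - dX^L \<cdot> Y^L
  of the left-invariant vector fields X^L(g) = T_\<delta>(\<lambda>_g) X.\<close>
definition is_lie_bracket :: "nat \<Rightarrow> 'a::real_normed_field vser \<Rightarrow> 'a vser \<Rightarrow> 'a vser \<Rightarrow> bool" where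
  "is_lie_bracket m X Y Z \<longleftrightarrow>
     (\<exists>XL YL A B.
        (\<forall>g. has_gderiv (grp_mul m g) (\<lambda>u k. 0) X (XL g)) \<and>
        (\<forall>g. has_gderiv (grp_mul m g) (\<lambda>u k. 0) Y (YL g)) \<and>
        has_gderiv YL (\<lambda>u k. 0) (XL (\<lambda>u k. 0)) A \<and>
        has_gderiv XL (\<lambda>u k. 0) (YL (\<lambda>u k. 0)) B \<and>
        (\<forall>w\<in>Words m. \<forall>i\<in>{1..m}. Z w i = A w i - B w i))"

end

theory Submission
  imports Defs
begin

text \<open>In the global chart \<open>\<delta> + c \<mapsto> c\<close>, left translation by \<open>g\<close> is \<open>h \<mapsto> h + g \<tilde>\<circ> h\<^sub>\<delta>\<close>.
  Along the ray \<open>h = tY\<close> the operator \<open>\<phi>\<^sub>t\<^sub>Y(x\<^sub>i)\<close> differs from \<open>e \<mapsto> x\<^sub>i e\<close> by a term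
  linear in \<open>t\<close>, so \<open>\<phi>\<^sub>t\<^sub>Y(\<eta>)1\<close> has derivative \<open>\<eta> \<lhd> Y\<close> at \<open>t = 0\<close>. Hence the
  left-invariant field generated by \<open>X\<close> is \<open>X\<^sup>L(g) = X + g \<lhd> X\<close>, which is affine in \<open>g\<close>,
  and the derivative of \<open>Y\<^sup>L\<close> at \<open>\<delta>\<close> in direction \<open>X\<^sup>L(\<delta>) = X\<close> is \<open>X \<lhd> Y\<close>. All infinite
  sums are finite coefficientwise, since only words of length at most \<open>|w|\<close> contribute
  to the coefficient of \<open>w\<close>.\<close>

definition Words_upto :: "nat \<Rightarrow> nat \<Rightarrow> nat list set" where
  "Words_upto m n = {w. set w \<subseteq> {0..m} \<and> length w \<le> n}"

lemma finite_Words_upto: "finite (Words_upto m n)"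
  unfolding Words_upto_def by (rule finite_lists_length_le) simp

lemma Words_upto_subset_Words: "Words_upto m n \<subseteq> Words m"
  unfolding Words_upto_def Words_def by auto

lemma infsum_Words_eq_sum_Words_upto:
  assumes "\<And>w. f w \<noteq> 0 \<Longrightarrow> length w \<le> n"
  shows "infsum f (Words m) = (\<Sum>w\<in>Words_upto m n. f w)"
proof -
  have "infsum f (Words m) = infsum f (Words_upto m n)"
    by (rule infsum_cong_neutral)
       (use assms Words_upto_subset_Words in \<open>auto simp: Words_upto_def Words_def\<close>)
  then show ?thesis
    using finite_Words_upto by simp
qed

lemma has_vector_derivative_of_real_mult:
  "((\<lambda>t. of_real t * c) has_vector_derivative (c::'a::real_normed_field)) (at x within S)"
proof -
  have "(of_real has_vector_derivative (1::'a)) (at x within S)"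
    using has_vector_derivative_of_real[OF DERIV_ident] by simp
  then show ?thesis
    using has_vector_derivative_mult_left by fastforce
qed

lemma pre_Nil [simp]: "pre x s [] = 0"
  by (simp add: pre_def)

lemma pre_Cons [simp]: "pre x s (y # u) = (if y = x then s u else 0)"
  by (simp add: pre_def)

lemma wsh_nonzero_length: "wsh u v w \<noteq> 0 \<Longrightarrow> length w = length u + length v"
proof (induction u v arbitrary: w rule: wsh.induct)
  case (1 v)
  then show ?case by (simp add: word_ser_def split: if_splits)
next
  case (2 a u)
  then show ?case by (simp add: word_ser_def split: if_splits)
next
  case (3 a u b v)
  show ?case
  proof (cases w)
    case Nil
    then show ?thesis using "3.prems" by simp
  next
    case (Cons y w')
    then have "wsh u (b # v) w' \<noteq> 0 \<or> wsh (a # u) v w' \<noteq> 0"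
      using "3.prems" by (auto split: if_splits)
    then show ?thesis using "3.IH" Cons by fastforce
  qed
qed

lemma wsh_commute: "wsh u v = wsh v u"
proof (induction u v rule: wsh.induct)
  case (1 v)
  then show ?case by (cases v) auto
next
  case (2 a u)
  then show ?case by simp
next
  case (3 a u b v)
  then have "wsh (a # u) (b # v) = (\<lambda>w. pre a (wsh (b # v) u) w + pre b (wsh v (a # u)) w)"
    by simp
  then show ?case by (simp add: fun_eq_iff add.commute)
qed

lemma shuffle_eq_sum:
  "shuffle m a b w =
     (\<Sum>(u, v) \<in> Words_upto m (length w) \<times> Words_upto m (length w). a u * b v * of_nat (wsh u v w))"
proof -
  let ?W = "Words_upto m (length w)"
  have "shuffle m a b w = infsum (\<lambda>(u, v). a u * b v * of_nat (wsh u v w)) (?W \<times> ?W)"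
    unfolding shuffle_def
  proof (rule infsum_cong_neutral)
    fix p assume "p \<in> ?W \<times> ?W - Words m \<times> Words m"
    then show "(case p of (u, v) \<Rightarrow> a u * b v * of_nat (wsh u v w)) = 0"
      using Words_upto_subset_Words by auto
  next
    fix p assume p: "p \<in> Words m \<times> Words m - ?W \<times> ?W"
    obtain u v where uv: "p = (u, v)" by (cases p)
    have "wsh u v w = 0"
      using p uv wsh_nonzero_length[of u v w] by (fastforce simp: Words_upto_def Words_def)
    then show "(case p of (u, v) \<Rightarrow> a u * b v * of_nat (wsh u v w)) = 0"
      using uv by simp
  qed simp
  then show ?thesis
    using finite_Words_upto by simp
qed

lemma shuffle_commute: "shuffle m a b = shuffle m b a"
  unfolding fun_eq_iff shuffle_eq_sum sum.cartesian_product[symmetric]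
  by (subst sum.swap) (simp add: wsh_commute mult_ac)

lemma shuffle_zero_left [simp]: "shuffle m (\<lambda>_. 0) b = (\<lambda>_. 0)"
  unfolding shuffle_def by (simp add: fun_eq_iff infsum_0)

lemma shuffle_nonzeroE:
  assumes "shuffle m a b w \<noteq> 0"
  obtains u v where "a u \<noteq> 0" "b v \<noteq> 0" "length w = length u + length v"
proof -
  from assms obtain p where "(case p of (u, v) \<Rightarrow> a u * b v * of_nat (wsh u v w)) \<noteq> 0"
    unfolding shuffle_eq_sum by (metis (no_types, lifting) sum.not_neutral_contains_not_neutral)
  moreover obtain u v where "p = (u, v)" by (cases p)
  ultimately have "a u \<noteq> 0" "b v \<noteq> 0" "wsh u v w \<noteq> 0" by auto
  then show ?thesis using that wsh_nonzero_length by blast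
qed

lemma shuffle_has_vector_derivative_scaled_left:
  fixes a :: "'a::real_normed_field ser"
  assumes "\<And>v. ((\<lambda>t. G t v) has_vector_derivative G' v) (at 0)"
  shows "((\<lambda>t. shuffle m (\<lambda>u. of_real t * a u) (G t) w)
           has_vector_derivative shuffle m a (G 0) w) (at 0)"
  unfolding shuffle_eq_sum
proof (rule has_vector_derivative_sum)
  fix p :: "nat list \<times> nat list"
  obtain u v where p: "p = (u, v)" by (cases p)
  have "((\<lambda>t. (of_real t * a u) * G t v) has_vector_derivative
          (of_real 0 * a u) * G' v + a u * G 0 v) (at 0)"
    by (intro has_vector_derivative_mult has_vector_derivative_of_real_mult assms)
  from has_vector_derivative_mult_left[OF this, of "of_nat (wsh u v w)"]
  show "((\<lambda>t. case p of (u, v) \<Rightarrow> of_real t * a u * G t v * of_nat (wsh u v w))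
          has_vector_derivative (case p of (u, v) \<Rightarrow> a u * G 0 v * of_nat (wsh u v w))) (at 0)"
    using p by (simp add: mult.commute)
qed

lemma phi_one_ser_nonzero_length:
  fixes d :: "'a::real_normed_field vser"
  shows "phi m d \<eta> one_ser w \<noteq> 0 \<Longrightarrow> length \<eta> \<le> length w"
proof (induction \<eta> arbitrary: w)
  case Nil
  then show ?case by simp
next
  case (Cons i \<eta>)
  show ?case
  proof (cases w)
    case Nil
    then show ?thesis using Cons.prems by (simp add: phi1_def)
  next
    case (Cons y w')
    have "pre i (phi m d \<eta> one_ser) w \<noteq> 0 \<or> pre 0 (shuffle m (comp_ser d i) (phi m d \<eta> one_ser)) w \<noteq> 0"
      using Cons.prems by (auto simp: phi1_def)
    with Cons consider "phi m d \<eta> one_ser w' \<noteq> 0"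
      | "shuffle m (comp_ser d i) (phi m d \<eta> one_ser) w' \<noteq> 0"
      by (auto split: if_splits)
    then show ?thesis
    proof cases
      case 1
      then show ?thesis using Cons.IH Cons by auto
    next
      case 2
      then obtain u v where "comp_ser d i u \<noteq> 0" "phi m d \<eta> one_ser v \<noteq> 0"
        "length w' = length u + length v"
        by (rule shuffle_nonzeroE)
      then show ?thesis using Cons.IH Cons by force
    qed
  qed
qed

lemma prelie_word_nonzero_length:
  fixes d :: "'a::real_normed_field vser"
  shows "prelie_word m \<eta> d w \<noteq> 0 \<Longrightarrow> length \<eta> \<le> length w"
proof (induction \<eta> arbitrary: w)
  case Nil
  then show ?case by simp
next
  case (Cons i \<eta>)
  show ?case
  proof (cases w)
    case Nil
    then show ?thesis using Cons.prems by (simp split: if_splits)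
  next
    case (Cons y w')
    have "pre i (prelie_word m \<eta> d) w \<noteq> 0 \<or> pre 0 (shuffle m (word_ser \<eta>) (comp_ser d i)) w \<noteq> 0"
      using Cons.prems by (auto split: if_splits)
    with Cons consider "prelie_word m \<eta> d w' \<noteq> 0"
      | "shuffle m (word_ser \<eta>) (comp_ser d i) w' \<noteq> 0"
      by (auto split: if_splits)
    then show ?thesis
    proof cases
      case 1
      then show ?thesis using Cons.IH Cons by auto
    next
      case 2
      then obtain u v where "word_ser \<eta> u \<noteq> (0::'a)" "comp_ser d i v \<noteq> 0"
        "length w' = length u + length v"
        by (rule shuffle_nonzeroE)
      then show ?thesis using Cons by (auto simp: word_ser_def split: if_splits)
    qed
  qed
qed

lemma mixcomp_eq_sum:
  "mixcomp m c d w i = (\<Sum>\<eta>\<in>Words_upto m (length w). c \<eta> i * phi m d \<eta> one_ser w)"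
  unfolding mixcomp_def
  by (rule infsum_Words_eq_sum_Words_upto) (use phi_one_ser_nonzero_length in fastforce)

lemma prelie_eq_sum:
  "prelie m c d w i = (\<Sum>\<eta>\<in>Words_upto m (length w). c \<eta> i * prelie_word m \<eta> d w)"
  unfolding prelie_def
  by (rule infsum_Words_eq_sum_Words_upto) (use prelie_word_nonzero_length in fastforce)

lemma phi_zero_one_ser: "phi m (\<lambda>u k. 0) \<eta> one_ser = word_ser \<eta>"
proof (induction \<eta>)
  case Nil
  then show ?case by (simp add: one_ser_def)
next
  case (Cons i \<eta>)
  have comp_zero: "comp_ser (\<lambda>u k. 0) i = (\<lambda>_. 0)"
    by (simp add: comp_ser_def fun_eq_iff)
  show ?case
    using Cons by (simp add: phi1_def comp_zero fun_eq_iff pre_def word_ser_def split: list.splits)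
qed

lemma shuffle_comp_ser_scaled_has_vector_derivative:
  fixes Y :: "'a::real_normed_field vser"
  assumes "\<And>v. ((\<lambda>t. phi m (\<lambda>u k. of_real t * Y u k) \<eta> one_ser v)
             has_vector_derivative prelie_word m \<eta> Y v) (at 0)"
  shows "((\<lambda>t. shuffle m (comp_ser (\<lambda>u k. of_real t * Y u k) i)
                   (phi m (\<lambda>u k. of_real t * Y u k) \<eta> one_ser) w)
           has_vector_derivative (if i = 0 then 0 else shuffle m (word_ser \<eta>) (comp_ser Y i) w)) (at 0)"
proof -
  let ?F = "\<lambda>t. phi m (\<lambda>u k. of_real t * Y u k) \<eta> one_ser"
  have "comp_ser (\<lambda>u k. of_real t * Y u k) i = (\<lambda>u. of_real t * comp_ser Y i u)" for t
    by (simp add: comp_ser_def fun_eq_iff)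
  moreover have "shuffle m (comp_ser Y i) (?F 0) w
      = (if i = 0 then 0 else shuffle m (word_ser \<eta>) (comp_ser Y i) w)"
  proof (cases "i = 0")
    case True
    then have "comp_ser Y i = (\<lambda>_. 0)" by (simp add: comp_ser_def fun_eq_iff)
    with True show ?thesis by simp
  next
    case False
    have "?F 0 = word_ser \<eta>"
      by (simp add: phi_zero_one_ser)
    with False show ?thesis by (simp add: shuffle_commute)
  qed
  moreover have "((\<lambda>t. shuffle m (\<lambda>u. of_real t * comp_ser Y i u) (?F t) w)
      has_vector_derivative shuffle m (comp_ser Y i) (?F 0) w) (at 0)"
    by (rule shuffle_has_vector_derivative_scaled_left) (rule assms)
  ultimately show ?thesis
    by simp
qed

lemma phi_scaled_has_vector_derivative:
  fixes Y :: "'a::real_normed_field vser"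
  shows "((\<lambda>t. phi m (\<lambda>u k. of_real t * Y u k) \<eta> one_ser w)
           has_vector_derivative prelie_word m \<eta> Y w) (at 0)"
proof (induction \<eta> arbitrary: w)
  case Nil
  then show ?case by simp
next
  case (Cons i \<eta>)
  let ?F = "\<lambda>t. phi m (\<lambda>u k. of_real t * Y u k) \<eta> one_ser"
  show ?case
  proof (cases w)
    case Nil
    then show ?thesis by (simp add: phi1_def)
  next
    case (Cons y w')
    have "((\<lambda>t. (if y = i then ?F t w' else 0) +
             (if y = 0 then shuffle m (comp_ser (\<lambda>u k. of_real t * Y u k) i) (?F t) w' else 0))
           has_vector_derivative
           (if y = i then prelie_word m \<eta> Y w' else 0) +
           (if y = 0 then (if i = 0 then 0 else shuffle m (word_ser \<eta>) (comp_ser Y i) w') else 0))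
           (at 0)"
      (is "(?G has_vector_derivative ?D) _")
      using Cons.IH shuffle_comp_ser_scaled_has_vector_derivative[OF Cons.IH]
      by (intro has_vector_derivative_add) simp_all
    moreover have "(\<lambda>t. phi m (\<lambda>u k. of_real t * Y u k) (i # \<eta>) one_ser w) = ?G"
      using Cons by (simp add: phi1_def)
    moreover have "prelie_word m (i # \<eta>) Y w = ?D"
      using Cons by simp
    ultimately show ?thesis
      by simp
  qed
qed

lemma grp_mul_has_gderiv_at_zero:
  fixes X :: "'a::real_normed_field vser"
  shows "has_gderiv (grp_mul m g) (\<lambda>u k. 0) X (\<lambda>w i. X w i + prelie m g X w i)"
  unfolding has_gderiv_def grp_mul_def mixcomp_eq_sum prelie_eq_sum add_0_left
proof (intro allI)
  fix w i
  show "((\<lambda>t. of_real t * X w i + (\<Sum>\<eta>\<in>Words_upto m (length w). g \<eta> i *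
              phi m (\<lambda>u k. of_real t * X u k) \<eta> one_ser w))
           has_vector_derivative
             X w i + (\<Sum>\<eta>\<in>Words_upto m (length w). g \<eta> i * prelie_word m \<eta> X w)) (at 0)"
    by (intro has_vector_derivative_add has_vector_derivative_sum has_vector_derivative_of_real_mult
        has_vector_derivative_mult_right phi_scaled_has_vector_derivative)
qed

lemma prelie_zero_left [simp]: "prelie m (\<lambda>u k. 0) X = (\<lambda>w i. 0)"
  unfolding prelie_def by (simp add: fun_eq_iff infsum_0)

lemma affine_prelie_has_gderiv:
  fixes Y :: "'a::real_normed_field vser"
  shows "has_gderiv (\<lambda>g w i. Y w i + prelie m g Y w i) x V (prelie m V Y)"
  unfolding has_gderiv_def prelie_eq_sum
proof (intro allI)
  fix w i
  have "((\<lambda>t. Y w i + (\<Sum>\<eta>\<in>Words_upto m (length w). x \<eta> i * prelie_word m \<eta> Y w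
                + of_real t * (V \<eta> i * prelie_word m \<eta> Y w)))
         has_vector_derivative
           0 + (\<Sum>\<eta>\<in>Words_upto m (length w). 0 + V \<eta> i * prelie_word m \<eta> Y w)) (at 0)"
    by (intro has_vector_derivative_add has_vector_derivative_sum has_vector_derivative_const
        has_vector_derivative_of_real_mult)
  then show "((\<lambda>t. Y w i + (\<Sum>\<eta>\<in>Words_upto m (length w).
                (x \<eta> i + of_real t * V \<eta> i) * prelie_word m \<eta> Y w))
         has_vector_derivative (\<Sum>\<eta>\<in>Words_upto m (length w). V \<eta> i * prelie_word m \<eta> Y w)) (at 0)"
    by (simp add: distrib_right mult.assoc)
qed

lemma is_lie_bracket_prelie_commutator:
  fixes X Y :: "'a::real_normed_field vser"
  shows "is_lie_bracket m X Y (\<lambda>w i. prelie m X Y w i - prelie m Y X w i)"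
proof -
  define XL where "XL = (\<lambda>g w i. X w i + prelie m g X w i)"
  define YL where "YL = (\<lambda>g w i. Y w i + prelie m g Y w i)"
  have "has_gderiv YL (\<lambda>u k. 0) (XL (\<lambda>u k. 0)) (prelie m X Y)"
    "has_gderiv XL (\<lambda>u k. 0) (YL (\<lambda>u k. 0)) (prelie m Y X)"
    by (simp_all add: XL_def YL_def affine_prelie_has_gderiv)
  moreover have "has_gderiv (grp_mul m g) (\<lambda>u k. 0) X (XL g)"
    "has_gderiv (grp_mul m g) (\<lambda>u k. 0) Y (YL g)" for g
    unfolding XL_def YL_def by (rule grp_mul_has_gderiv_at_zero)+
  ultimately show ?thesis
    unfolding is_lie_bracket_def by blast
qed

theorem proposition5p5:
  fixes m :: nat
  shows "(\<forall>c d :: real vser. is_lie_bracket m c d (\<lambda>w i. prelie m c d w i - prelie m d c w i))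
       \<and> (\<forall>c d :: complex vser. is_lie_bracket m c d (\<lambda>w i. prelie m c d w i - prelie m d c w i))"
  using is_lie_bracket_prelie_commutator[where 'a = real]
    is_lie_bracket_prelie_commutator[where 'a = complex] by blast

end
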